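(* Let $(M,\Sigma)$ be a measurable space, $r\ge1$, and $\mu_1,\dots,\mu_r$ non-atomic countably additive finite measures on $\Sigma$; put $\mu=\frac1r\sum_{i=1}^r\mu_i$. For $k\ge1$ let $t(k)=k\bmod r$ if this is nonzero and $t(k)=r$ otherwise. Let $(H_k)_{k\ge1}$ be a sequence of measurable sets such that for every $k$: $H_k\subseteq M\setminus\bigcup_{i=1}^{k-1}H_i$, $H_k$ admits a strong solution (a partition $H_k=F_1\sqcup\dots\sqcup F_r$ with $\mu_i(F_i)\ge\mu_i(F_j)$ for all $i,j$), and $\mu_{t(k)}(H_k)\ge 2^{-(r-1)}\mu_{t(k)}\bigl(M\setminus\bigcup_{i=1}^{k-1}H_i\bigr)$. For $s\ge0$ let $M_s=M\setminus\bigcup_{i=1}^{sr}H_i$ (so $M_0=M$). Then for every $s\ge1$, $$\mu(M_s)\le\frac{2^{r-1}-1}{2^{r-1}}\,\mu(M_{s-1}).$$ *)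

theory Defs
  imports "HOL-Analysis.Analysis"
begin

definition nonatomic :: "'a measure \<Rightarrow> bool" where
  "nonatomic m \<longleftrightarrow> (\<forall>A\<in>sets m. 0 < emeasure m A \<longrightarrow>
      (\<exists>B\<in>sets m. B \<subseteq> A \<and> 0 < emeasure m B \<and> emeasure m B < emeasure m A))"

definition strong_solution :: "'a measure \<Rightarrow> (nat \<Rightarrow> 'a measure) \<Rightarrow> nat \<Rightarrow> 'a set \<Rightarrow> bool" where
  "strong_solution N mu r H \<longleftrightarrow> (\<exists>F :: nat \<Rightarrow> 'a set.
      (\<forall>i\<in>{1..r}. F i \<in> sets N) \<and> disjoint_family_on F {1..r} \<and>
      (\<Union>i\<in>{1..r}. F i) = H \<and>
      (\<forall>i\<in>{1..r}. \<forall>j\<in>{1..r}. measure (mu i) (F i) \<ge> measure (mu i) (F j)))"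

definition tidx :: "nat \<Rightarrow> nat \<Rightarrow> nat" where
  "tidx r k = (if k mod r \<noteq> 0 then k mod r else r)"

end

theory Submission
  imports Defs
begin

text \<open>Let M k be the set of points not covered by H 1, ..., H k. On the r steps
  k = (s-1)r + 1, ..., sr the index t k runs once through 1, ..., r, and step k removes at least
  the fraction 2^(1-r) of the current remainder as measured by mu (t k). As the remainders decrease,
  mu i (M (sr)) <= (1 - 2^(1-r)) mu i (M ((s-1)r)) for every i, and averaging over i gives the claim.\<close>

definition uncovered :: "'a measure \<Rightarrow> (nat \<Rightarrow> 'a set) \<Rightarrow> nat \<Rightarrow> 'a set" where
  "uncovered N H k = space N - (\<Union>j\<in>{1..k}. H j)"

lemma uncovered_Suc: "uncovered N H (Suc k) = uncovered N H k - H (Suc k)"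
  unfolding uncovered_def by (auto simp: atLeastAtMostSuc_conv)

lemma decseq_uncovered: "decseq (uncovered N H)"
  unfolding uncovered_def by (intro decseq_SucI) (auto simp: atLeastAtMostSuc_conv)

lemma sets_uncovered:
  assumes "\<And>k. k \<ge> 1 \<Longrightarrow> H k \<in> sets N"
  shows "uncovered N H k \<in> sets N"
  unfolding uncovered_def using assms by (intro sets.Diff sets.top sets.finite_UN) auto

lemma tidx_add_mult: "i \<in> {1..r} \<Longrightarrow> tidx r (n * r + i) = i"
  unfolding tidx_def by (cases "i = r") auto

lemma (in finite_measure) measure_Diff_le_if_large_subset:
  assumes "A \<in> sets M" "B \<in> sets M" "B \<subseteq> A" "c * measure M A \<le> measure M B"
  shows "measure M (A - B) \<le> (1 - c) * measure M A"
  using assms finite_measure_Diff[of A B] by (simp add: algebra_simps)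

lemma (in finite_measure) measure_decseq_contract:
  assumes "decseq R" "\<And>k. R k \<in> sets M" "0 \<le> q"
    and contract: "measure M (R (Suc k)) \<le> q * measure M (R k)"
    and "n \<le> k" "Suc k \<le> m"
  shows "measure M (R m) \<le> q * measure M (R n)"
proof -
  have "measure M (R m) \<le> measure M (R (Suc k))"
    using assms by (intro finite_measure_mono) (auto simp: decseq_def)
  also note contract
  also have "q * measure M (R k) \<le> q * measure M (R n)"
    using assms by (intro mult_left_mono finite_measure_mono) (auto simp: decseq_def)
  finally show ?thesis .
qed

lemma uncovered_round_contract:
  fixes N :: "'a measure" and mu :: "nat \<Rightarrow> 'a measure" and H :: "nat \<Rightarrow> 'a set"
  assumes i: "i \<in> {1..r}"
    and sets_mu: "sets (mu i) = sets N"
    and fin: "finite_measure (mu i)"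
    and H_meas: "\<And>k. k \<ge> 1 \<Longrightarrow> H k \<in> sets N"
    and H_sub: "\<And>k. k \<ge> 1 \<Longrightarrow> H k \<subseteq> space N - (\<Union>j\<in>{1..<k}. H j)"
    and H_big: "\<And>k. k \<ge> 1 \<Longrightarrow>
        c * measure (mu (tidx r k)) (space N - (\<Union>j\<in>{1..<k}. H j))
          \<le> measure (mu (tidx r k)) (H k)"
    and "c \<le> 1"
  shows "measure (mu i) (uncovered N H (Suc n * r))
      \<le> (1 - c) * measure (mu i) (uncovered N H (n * r))"
proof -
  interpret finite_measure "mu i" by (fact fin)
  define k where "k = n * r + i - 1"
  have tidx_k: "tidx r (Suc k) = i"
    using i tidx_add_mult[OF i] by (simp add: k_def)
  have before_k: "space N - (\<Union>j\<in>{1..<Suc k}. H j) = uncovered N H k"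
    by (simp add: uncovered_def atLeastLessThanSuc_atLeastAtMost)
  have sets_uncovered_mu: "uncovered N H m \<in> sets (mu i)" for m
    using sets_uncovered[of H N m] H_meas sets_mu by simp
  have "H (Suc k) \<subseteq> uncovered N H k"
    using H_sub[of "Suc k"] before_k by simp
  moreover have "c * measure (mu i) (uncovered N H k) \<le> measure (mu i) (H (Suc k))"
    using H_big[of "Suc k"] tidx_k before_k by simp
  ultimately have contract:
    "measure (mu i) (uncovered N H (Suc k)) \<le> (1 - c) * measure (mu i) (uncovered N H k)"
    unfolding uncovered_Suc using H_meas[of "Suc k"] sets_uncovered_mu sets_mu
    by (intro measure_Diff_le_if_large_subset) simp_all
  have "n * r \<le> k" "Suc k \<le> Suc n * r"
    using i by (auto simp: k_def)
  with \<open>c \<le> 1\<close> show ?thesis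
    by (intro measure_decseq_contract[OF decseq_uncovered sets_uncovered_mu _ contract]) simp_all
qed

theorem lemma4:
  fixes N :: "'a measure" and mu :: "nat \<Rightarrow> 'a measure" and r :: nat
    and H :: "nat \<Rightarrow> 'a set" and s :: nat
  assumes r: "r \<ge> 1"
    and sets_mu: "\<And>i. i \<in> {1..r} \<Longrightarrow> sets (mu i) = sets N"
    and fin: "\<And>i. i \<in> {1..r} \<Longrightarrow> finite_measure (mu i)"
    and na: "\<And>i. i \<in> {1..r} \<Longrightarrow> nonatomic (mu i)"
    and H_meas: "\<And>k. k \<ge> 1 \<Longrightarrow> H k \<in> sets N"
    and H_sub: "\<And>k. k \<ge> 1 \<Longrightarrow> H k \<subseteq> space N - (\<Union>i\<in>{1..<k}. H i)"
    and H_sol: "\<And>k. k \<ge> 1 \<Longrightarrow> strong_solution N mu r (H k)"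
    and H_big: "\<And>k. k \<ge> 1 \<Longrightarrow>
        measure (mu (tidx r k)) (H k) \<ge>
          (1 / 2 ^ (r - 1)) * measure (mu (tidx r k)) (space N - (\<Union>i\<in>{1..<k}. H i))"
    and s: "s \<ge> 1"
  shows "(1 / real r) * (\<Sum>i=1..r. measure (mu i) (space N - (\<Union>j\<in>{1..s*r}. H j)))
       \<le> ((2 ^ (r - 1) - 1) / 2 ^ (r - 1)) *
         ((1 / real r) * (\<Sum>i=1..r. measure (mu i) (space N - (\<Union>j\<in>{1..(s-1)*r}. H j))))"
proof -
  define q :: real where "q = 1 - 1 / 2 ^ (r - 1)"
  obtain n where s_eq: "s = Suc n" using s by (cases s) auto
  have "measure (mu i) (uncovered N H (s * r)) \<le> q * measure (mu i) (uncovered N H ((s - 1) * r))"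
    if "i \<in> {1..r}" for i
    unfolding s_eq diff_Suc_1 q_def
    using uncovered_round_contract[OF that sets_mu[OF that] fin[OF that] H_meas H_sub H_big]
    by simp
  then have "(\<Sum>i=1..r. measure (mu i) (uncovered N H (s * r)))
      \<le> q * (\<Sum>i=1..r. measure (mu i) (uncovered N H ((s - 1) * r)))"
    by (auto simp: sum_distrib_left intro: sum_mono)
  moreover have "(2 ^ (r - 1) - 1) / 2 ^ (r - 1) = q"
    by (simp add: q_def field_simps)
  ultimately show ?thesis
    using r by (simp add: uncovered_def divide_right_mono mult.left_commute)
qed

end
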